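(* Let $\alpha>0$ and let $\varphi\ge0$ be a measurable function on $\mathbb{C}$ satisfying condition $(I_1)$. Then $T_\varphi$ is bounded on $F^\infty_\alpha$ if and only if $\tilde{\varphi}_t\in L^\infty(\mathbb{C},dA)$ for every $t>0$.
   Context: $d\lambda_\alpha(w)=\frac{\alpha}{\pi}e^{-\alpha|w|^2}dA(w)$, $K_z(w)=e^{\alpha\bar z w}$. $\varphi$ satisfies condition $(I_1)$ if $\int_{\mathbb{C}}|\varphi(w)||K_z(w)|^2\,d\lambda_\alpha(w)<\infty$ for all $z\in\mathbb{C}$. $F^\infty_\alpha$ is the space of entire $f$ with $\|f\|_{\infty,\alpha}=\sup_z|f(z)|e^{-\alpha|z|^2/2}<\infty$. $T_\varphi f(z)=\int_{\mathbb{C}}\varphi(w)f(w)\overline{K_z(w)}\,d\lambda_\alpha(w)$. For $t>0$, $\tilde{\varphi}_t(z)=\frac{\alpha}{\pi}\int_{\mathbb{C}}\varphi(w)e^{-\alpha t|z-w|^2/2}\,dA(w)$. *)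

theory Defs
  imports "HOL-Analysis.Analysis"
begin

text \<open>Gaussian weight of d lambda_alpha with respect to dA (Lebesgue measure lborel on C).\<close>
definition gauss_wt :: "real \<Rightarrow> complex \<Rightarrow> real" where
  "gauss_wt \<alpha> w = (\<alpha> / pi) * exp (- \<alpha> * (cmod w)\<^sup>2)"

definition fock_kernel :: "real \<Rightarrow> complex \<Rightarrow> complex \<Rightarrow> complex" where
  "fock_kernel \<alpha> z w = exp (complex_of_real \<alpha> * cnj z * w)"

definition cond_I1 :: "real \<Rightarrow> (complex \<Rightarrow> real) \<Rightarrow> bool" where
  "cond_I1 \<alpha> \<phi> \<longleftrightarrow> (\<forall>z. (\<integral>\<^sup>+ w. ennreal (\<bar>\<phi> w\<bar> * (cmod (fock_kernel \<alpha> z w))\<^sup>2 * gauss_wt \<alpha> w) \<partial>lborel) < \<infinity>)"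

definition fock_inf :: "real \<Rightarrow> (complex \<Rightarrow> complex) set" where
  "fock_inf \<alpha> = {f. f holomorphic_on UNIV \<and>
      (\<exists>C. \<forall>z. cmod (f z) * exp (- \<alpha> * (cmod z)\<^sup>2 / 2) \<le> C)}"

definition fock_inf_norm :: "real \<Rightarrow> (complex \<Rightarrow> complex) \<Rightarrow> real" where
  "fock_inf_norm \<alpha> f = (SUP z. cmod (f z) * exp (- \<alpha> * (cmod z)\<^sup>2 / 2))"

definition toeplitz :: "real \<Rightarrow> (complex \<Rightarrow> real) \<Rightarrow> (complex \<Rightarrow> complex) \<Rightarrow> complex \<Rightarrow> complex" where
  "toeplitz \<alpha> \<phi> f z = (\<integral> w. complex_of_real (\<phi> w * gauss_wt \<alpha> w) * f w * cnj (fock_kernel \<alpha> z w) \<partial>lborel)"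

definition toeplitz_bounded_fock_inf :: "real \<Rightarrow> (complex \<Rightarrow> real) \<Rightarrow> bool" where
  "toeplitz_bounded_fock_inf \<alpha> \<phi> \<longleftrightarrow> (\<exists>C. \<forall>f \<in> fock_inf \<alpha>.
      (\<forall>z. integrable lborel (\<lambda>w. complex_of_real (\<phi> w * gauss_wt \<alpha> w) * f w * cnj (fock_kernel \<alpha> z w)))
      \<and> toeplitz \<alpha> \<phi> f \<in> fock_inf \<alpha>
      \<and> fock_inf_norm \<alpha> (toeplitz \<alpha> \<phi> f) \<le> C * fock_inf_norm \<alpha> f)"

definition phi_tilde :: "real \<Rightarrow> (complex \<Rightarrow> real) \<Rightarrow> real \<Rightarrow> complex \<Rightarrow> ennreal" where
  "phi_tilde \<alpha> \<phi> t z = (\<integral>\<^sup>+ w. ennreal ((\<alpha> / pi) * \<phi> w * exp (- \<alpha> * t * (cmod (z - w))\<^sup>2 / 2)) \<partial>lborel)"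

definition ess_bounded_ennreal :: "(complex \<Rightarrow> ennreal) \<Rightarrow> bool" where
  "ess_bounded_ennreal g \<longleftrightarrow> g \<in> borel_measurable lborel \<and> (\<exists>C::real. AE z in lborel. g z \<le> ennreal C)"

end

theory Submission
  imports Defs "HOL-Probability.Distributions"
begin

(* Test T_phi on the kernels: |K_z(w)|^2 e^(-alpha |w|^2) = e^(alpha |z|^2) e^(-alpha |z - w|^2), so
   e^(-alpha |z|^2) T_phi K_z (z) is exactly phi~_2(z), while ||K_z|| <= e^(alpha |z|^2 / 2). Hence a
   bounded T_phi has phi~_2 bounded. Conversely, the same kernel identity gives
   |T_phi f(z)| e^(-alpha |z|^2 / 2) <= ||f|| phi~_1(z), and finiteness of phi~_(1/2)(0) makes the
   defining integral an everywhere convergent power series in z, so T_phi f is entire.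
   The transforms for different t control each other: phi~_t decreases in t, and by the semigroup
   property of Gaussians phi~_s is a Gaussian average of phi~_t for s < t, which turns an a.e. bound
   on phi~_t into an everywhere bound on phi~_s. *)

section \<open>Gaussian integrals\<close>

lemma nn_integral_gaussian:
  fixes c :: real assumes c: "c > 0"
  shows "(\<integral>\<^sup>+ t. ennreal (exp (- c * t\<^sup>2)) \<partial>lborel) = ennreal (sqrt (pi / c))"
proof -
  define s where "s = 1 / sqrt (2 * c)"
  have s: "s > 0" using c by (simp add: s_def)
  have s2: "2 * s\<^sup>2 = 1 / c" using c by (simp add: s_def power_divide)
  have "exp (- c * t\<^sup>2) = sqrt (pi / c) * normal_density 0 s t" for t
  proof -
    have "sqrt (2 * pi * s\<^sup>2) = sqrt (pi / c)" and "t\<^sup>2 / (2 * s\<^sup>2) = c * t\<^sup>2"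
      using s2 by (simp_all add: field_simps)
    then show ?thesis unfolding normal_density_def using c by simp
  qed
  then have "(\<integral>\<^sup>+ t. ennreal (exp (- c * t\<^sup>2)) \<partial>lborel)
      = ennreal (sqrt (pi / c)) * (\<integral>\<^sup>+ t. ennreal (normal_density 0 s t) \<partial>lborel)"
    using c by (simp add: ennreal_mult nn_integral_cmult)
  also have "(\<integral>\<^sup>+ t. ennreal (normal_density 0 s t) \<partial>lborel) = 1"
    using s by (simp add: nn_integral_eq_integral)
  finally show ?thesis by simp
qed

lemma nn_integral_gaussian_euclidean:
  fixes c :: real and v :: "'a::euclidean_space" assumes c: "c > 0"
  shows "(\<integral>\<^sup>+ x. ennreal (exp (- c * (norm (x - v))\<^sup>2)) \<partial>lborel) = ennreal (sqrt (pi / c) ^ DIM('a))"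
proof -
  have "(\<integral>\<^sup>+ x. ennreal (exp (- c * (norm (x - v))\<^sup>2)) \<partial>lborel)
      = (\<integral>\<^sup>+ x. ennreal (exp (- c * (norm (x - v))\<^sup>2)) \<partial>distr lborel borel ((+) v))"
    by (simp add: lborel_distr_plus)
  also have "\<dots> = (\<integral>\<^sup>+ x. ennreal (exp (- c * (norm (x::'a))\<^sup>2)) \<partial>lborel)"
    by (simp add: nn_integral_distr)
  also have "\<dots> = (\<integral>\<^sup>+ x. (\<Prod>b\<in>Basis. ennreal (exp (- c * ((x::'a) \<bullet> b)\<^sup>2))) \<partial>lborel)"
  proof (rule nn_integral_cong)
    fix x :: 'a
    have "(norm x)\<^sup>2 = (\<Sum>b\<in>Basis. (x \<bullet> b)\<^sup>2)"
      unfolding power2_norm_eq_inner by (simp add: euclidean_inner[of x x] power2_eq_square)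
    then show "ennreal (exp (- c * (norm x)\<^sup>2)) = (\<Prod>b\<in>Basis. ennreal (exp (- c * (x \<bullet> b)\<^sup>2)))"
      by (simp add: sum_distrib_left exp_sum prod_ennreal flip: sum_negf)
  qed
  also have "\<dots> = (\<Prod>b\<in>(Basis::'a set). \<integral>\<^sup>+ t. ennreal (exp (- c * t\<^sup>2)) \<partial>lborel)"
    by (rule nn_integral_lborel_prod) auto
  also have "\<dots> = ennreal (sqrt (pi / c) ^ DIM('a))"
    using nn_integral_gaussian[OF c] c by (simp add: ennreal_power)
  finally show ?thesis .
qed

lemma weighted_norm_diff_sq_split:
  fixes z a w :: "'a::real_inner" and p q :: real
  assumes "p + q \<noteq> 0"
  shows "p * (norm (z - a))\<^sup>2 + q * (norm (a - w))\<^sup>2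
       = (p + q) * (norm (a - (p *\<^sub>R z + q *\<^sub>R w) /\<^sub>R (p + q)))\<^sup>2 + p * q / (p + q) * (norm (z - w))\<^sup>2"
proof -
  have "(p + q) * (p * (norm (z - a))\<^sup>2 + q * (norm (a - w))\<^sup>2)
      = (norm ((p + q) *\<^sub>R a - (p *\<^sub>R z + q *\<^sub>R w)))\<^sup>2 + p * q * (norm (z - w))\<^sup>2"
    by (simp add: power2_norm_eq_inner algebra_simps)
  moreover have "(norm ((p + q) *\<^sub>R a - (p *\<^sub>R z + q *\<^sub>R w)))\<^sup>2
      = (p + q)\<^sup>2 * (norm (a - (p *\<^sub>R z + q *\<^sub>R w) /\<^sub>R (p + q)))\<^sup>2"
  proof -
    have "(p + q) *\<^sub>R a - (p *\<^sub>R z + q *\<^sub>R w) = (p + q) *\<^sub>R (a - (p *\<^sub>R z + q *\<^sub>R w) /\<^sub>R (p + q))"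
      using assms by (simp add: scaleR_right_diff_distrib)
    then show ?thesis by (simp add: power_mult_distrib)
  qed
  ultimately show ?thesis
    using assms by (simp add: field_simps power2_eq_square)
qed

lemma nn_integral_gaussian_product:
  fixes z w :: "'a::euclidean_space" and p q :: real
  assumes p: "p > 0" and q: "q > 0"
  shows "(\<integral>\<^sup>+ a. ennreal (exp (- p * (norm (z - a))\<^sup>2) * exp (- q * (norm (a - w))\<^sup>2)) \<partial>lborel)
      = ennreal (sqrt (pi / (p + q)) ^ DIM('a) * exp (- (p * q / (p + q)) * (norm (z - w))\<^sup>2))"
proof -
  define c where "c = (p *\<^sub>R z + q *\<^sub>R w) /\<^sub>R (p + q)"
  have "exp (- p * (norm (z - a))\<^sup>2) * exp (- q * (norm (a - w))\<^sup>2)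
      = exp (- (p * q / (p + q)) * (norm (z - w))\<^sup>2) * exp (- (p + q) * (norm (a - c))\<^sup>2)" for a
    using weighted_norm_diff_sq_split[of p q z a w] p q
    unfolding c_def exp_add[symmetric] by (simp add: algebra_simps)
  then have "(\<integral>\<^sup>+ a. ennreal (exp (- p * (norm (z - a))\<^sup>2) * exp (- q * (norm (a - w))\<^sup>2)) \<partial>lborel)
      = ennreal (exp (- (p * q / (p + q)) * (norm (z - w))\<^sup>2))
        * (\<integral>\<^sup>+ a. ennreal (exp (- (p + q) * (norm (a - c))\<^sup>2)) \<partial>lborel)"
    by (simp add: ennreal_mult nn_integral_cmult)
  also have "\<dots> = ennreal (exp (- (p * q / (p + q)) * (norm (z - w))\<^sup>2))
      * ennreal (sqrt (pi / (p + q)) ^ DIM('a))"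
    using nn_integral_gaussian_euclidean[of "p + q" c] p q by simp
  finally show ?thesis
    using p q by (simp add: ennreal_mult mult.commute)
qed

lemma nn_integral_gaussian_semigroup:
  fixes g :: "'a::euclidean_space \<Rightarrow> ennreal" and z :: 'a and p q :: real
  assumes [measurable]: "g \<in> borel_measurable lborel" and p: "p > 0" and q: "q > 0"
  shows "(\<integral>\<^sup>+ a. ennreal (exp (- p * (norm (z - a))\<^sup>2))
              * (\<integral>\<^sup>+ w. g w * ennreal (exp (- q * (norm (a - w))\<^sup>2)) \<partial>lborel) \<partial>lborel)
       = ennreal (sqrt (pi / (p + q)) ^ DIM('a))
         * (\<integral>\<^sup>+ w. g w * ennreal (exp (- (p * q / (p + q)) * (norm (z - w))\<^sup>2)) \<partial>lborel)"
proof -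
  let ?k = "\<lambda>a w. exp (- p * (norm (z - a))\<^sup>2) * exp (- q * (norm (a - w))\<^sup>2)"
  have "(\<integral>\<^sup>+ a. ennreal (exp (- p * (norm (z - a))\<^sup>2))
            * (\<integral>\<^sup>+ w. g w * ennreal (exp (- q * (norm (a - w))\<^sup>2)) \<partial>lborel) \<partial>lborel)
      = (\<integral>\<^sup>+ a. \<integral>\<^sup>+ w. g w * ennreal (?k a w) \<partial>lborel \<partial>lborel)"
    by (simp add: nn_integral_cmult[symmetric] ennreal_mult ac_simps)
  also have "\<dots> = (\<integral>\<^sup>+ w. \<integral>\<^sup>+ a. g w * ennreal (?k a w) \<partial>lborel \<partial>lborel)"
    by (rule lborel_pair.Fubini') measurable
  also have "\<dots> = (\<integral>\<^sup>+ w. g w * (\<integral>\<^sup>+ a. ennreal (?k a w) \<partial>lborel) \<partial>lborel)"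
    by (rule nn_integral_cong) (rule nn_integral_cmult, simp)
  also have "\<dots> = (\<integral>\<^sup>+ w. g w * ennreal (sqrt (pi / (p + q)) ^ DIM('a)
                      * exp (- (p * q / (p + q)) * (norm (z - w))\<^sup>2)) \<partial>lborel)"
    by (simp only: nn_integral_gaussian_product[OF p q])
  also have "\<dots> = ennreal (sqrt (pi / (p + q)) ^ DIM('a))
        * (\<integral>\<^sup>+ w. g w * ennreal (exp (- (p * q / (p + q)) * (norm (z - w))\<^sup>2)) \<partial>lborel)"
    using p q by (simp add: ennreal_mult nn_integral_cmult[symmetric] ac_simps)
  finally show ?thesis .
qed

section \<open>The heat transform\<close>

lemma phi_tilde_eq_gaussian_integral:
  "phi_tilde \<alpha> \<phi> t z
     = (\<integral>\<^sup>+ w. ennreal (\<alpha> / pi * \<phi> w) * ennreal (exp (- (\<alpha> * t / 2) * (cmod (z - w))\<^sup>2)) \<partial>lborel)"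
  unfolding phi_tilde_def
  by (rule nn_integral_cong) (simp add: ennreal_mult''[symmetric] ac_simps)

lemma borel_measurable_phi_tilde:
  assumes [measurable]: "\<phi> \<in> borel_measurable lborel"
  shows "phi_tilde \<alpha> \<phi> t \<in> borel_measurable lborel"
proof -
  have "(\<lambda>(z, w). ennreal (\<alpha> / pi * \<phi> w * exp (- \<alpha> * t * (cmod (z - w))\<^sup>2 / 2)))
      \<in> borel_measurable (lborel \<Otimes>\<^sub>M lborel)"
    by measurable
  from lborel.borel_measurable_nn_integral_fst[OF this] show ?thesis
    unfolding phi_tilde_def by simp
qed

lemma ess_bounded_ennreal_phi_tildeI:
  assumes "\<phi> \<in> borel_measurable lborel" and "\<And>z. phi_tilde \<alpha> \<phi> t z \<le> ennreal B"
  shows "ess_bounded_ennreal (phi_tilde \<alpha> \<phi> t)"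
  unfolding ess_bounded_ennreal_def using borel_measurable_phi_tilde[OF assms(1)] assms(2)
  by (auto intro!: exI[of _ B])

lemma phi_tilde_antimono:
  assumes "\<alpha> \<ge> 0" and "\<And>w. \<phi> w \<ge> 0" and "s \<le> t"
  shows "phi_tilde \<alpha> \<phi> t z \<le> phi_tilde \<alpha> \<phi> s z"
  unfolding phi_tilde_def
proof (intro nn_integral_mono ennreal_leI mult_left_mono)
  show "exp (- \<alpha> * t * (cmod (z - w))\<^sup>2 / 2) \<le> exp (- \<alpha> * s * (cmod (z - w))\<^sup>2 / 2)" for w
    using assms by (simp add: mult_left_mono mult_right_mono)
qed (use assms in auto)

lemma phi_tilde_semigroup:
  assumes \<alpha>: "\<alpha> > 0" and [measurable]: "\<phi> \<in> borel_measurable lborel" and p: "p > 0" and q: "q > 0"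
  shows "(\<integral>\<^sup>+ a. ennreal (exp (- p * (cmod (z - a))\<^sup>2)) * phi_tilde \<alpha> \<phi> (2 * q / \<alpha>) a \<partial>lborel)
       = ennreal (pi / (p + q)) * phi_tilde \<alpha> \<phi> (2 * (p * q / (p + q)) / \<alpha>) z"
proof -
  define g where "g w = ennreal (\<alpha> / pi * \<phi> w)" for w
  have [measurable]: "g \<in> borel_measurable lborel"
    unfolding g_def by measurable
  have phi_tilde_g: "phi_tilde \<alpha> \<phi> (2 * c / \<alpha>) a
      = (\<integral>\<^sup>+ w. g w * ennreal (exp (- c * (cmod (a - w))\<^sup>2)) \<partial>lborel)" for c a
    using \<alpha> unfolding g_def phi_tilde_eq_gaussian_integral by simp
  have "sqrt (pi / (p + q)) ^ DIM(complex) = pi / (p + q)"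
    using p q by simp
  then show ?thesis
    unfolding phi_tilde_g using nn_integral_gaussian_semigroup[where g = g and z = z, OF _ p q] by simp
qed

lemma phi_tilde_le_of_AE_le:
  assumes \<alpha>: "\<alpha> > 0" and [measurable]: "\<phi> \<in> borel_measurable lborel"
    and st: "0 < s" "s < t"
    and bound: "AE a in lborel. phi_tilde \<alpha> \<phi> t a \<le> M"
  shows "phi_tilde \<alpha> \<phi> s z \<le> ennreal (t / s) * M"
proof -
  txt \<open>These weights make \<open>phi_tilde \<alpha> \<phi> s\<close> a Gaussian average of \<open>phi_tilde \<alpha> \<phi> t\<close>.\<close>
  define q where "q = \<alpha> * t / 2"
  define p where "p = q * s / (t - s)"
  have q: "q > 0" using \<alpha> st by (simp add: q_def)
  have p: "p > 0" using q st by (simp add: p_def)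
  have sum: "p + q = q * t / (t - s)"
    using st by (simp add: p_def field_simps)
  have pq: "p * q / (p + q) = q * s / t"
    using st q unfolding sum by (simp add: p_def field_simps)
  have s_eq: "2 * (p * q / (p + q)) / \<alpha> = s" and t_eq: "2 * q / \<alpha> = t"
    unfolding pq unfolding q_def using st \<alpha> by simp_all
  have pq_p: "(p + q) / p = t / s"
    using st q unfolding sum by (simp add: p_def field_simps)
  have "ennreal (pi / (p + q)) * phi_tilde \<alpha> \<phi> s z
      = (\<integral>\<^sup>+ a. ennreal (exp (- p * (cmod (z - a))\<^sup>2)) * phi_tilde \<alpha> \<phi> t a \<partial>lborel)"
    using phi_tilde_semigroup[OF \<alpha> _ p q] unfolding s_eq t_eq by simp
  also have "\<dots> \<le> (\<integral>\<^sup>+ a. ennreal (exp (- p * (cmod (a - z))\<^sup>2)) * M \<partial>lborel)"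
    using bound by (intro nn_integral_mono_AE) (auto elim!: eventually_mono simp: norm_minus_commute mult_left_mono)
  also have "\<dots> = ennreal (pi / p) * M"
    using nn_integral_gaussian_euclidean[OF p, of z] p by (simp add: nn_integral_multc)
  also have "\<dots> = ennreal (pi / (p + q)) * (ennreal (t / s) * M)"
  proof -
    have "ennreal (pi / p) = ennreal (pi / (p + q)) * ennreal ((p + q) / p)"
      using p q by (simp add: ennreal_mult[symmetric])
    then show ?thesis by (simp add: pq_p mult.assoc)
  qed
  finally show ?thesis
    using p q by (subst (asm) ennreal_mult_le_mult_iff) auto
qed

lemma phi_tilde_bounded_of_ess_bounded:
  assumes \<alpha>: "\<alpha> > 0" and nn: "\<And>w. \<phi> w \<ge> 0" and meas: "\<phi> \<in> borel_measurable lborel"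
    and "t > 0" "s > 0" and "ess_bounded_ennreal (phi_tilde \<alpha> \<phi> t)"
  shows "\<exists>B\<ge>0. \<forall>z. phi_tilde \<alpha> \<phi> s z \<le> ennreal B"
proof -
  obtain M where M: "AE z in lborel. phi_tilde \<alpha> \<phi> t z \<le> ennreal M"
    using assms(6) unfolding ess_bounded_ennreal_def by blast
  define r where "r = min s (t / 2)"
  have r: "0 < r" "r < t" "r \<le> s"
    using assms(4,5) by (auto simp: r_def)
  have "phi_tilde \<alpha> \<phi> s z \<le> ennreal (t / r * max 0 M)" for z
  proof -
    have "phi_tilde \<alpha> \<phi> s z \<le> phi_tilde \<alpha> \<phi> r z"
      using \<alpha> nn r by (intro phi_tilde_antimono) auto
    also have "\<dots> \<le> ennreal (t / r) * ennreal M"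
      using \<alpha> meas r M by (intro phi_tilde_le_of_AE_le) auto
    also have "\<dots> = ennreal (t / r * max 0 M)"
      using r by (subst ennreal_mult') (simp_all add: ennreal_max_0)
    finally show ?thesis .
  qed
  moreover have "t / r * max 0 M \<ge> 0"
    using r by simp
  ultimately show ?thesis by blast
qed

section \<open>The reproducing kernel\<close>

lemma borel_measurable_gauss_wt [measurable]: "gauss_wt \<alpha> \<in> borel_measurable borel"
  unfolding gauss_wt_def[abs_def] by (intro borel_measurable_continuous_onI continuous_intros)

lemma borel_measurable_cnj [measurable]: "cnj \<in> borel_measurable borel"
  by (intro borel_measurable_continuous_onI continuous_intros)

lemma borel_measurable_fock_kernel [measurable]: "fock_kernel \<alpha> z \<in> borel_measurable borel"
  unfolding fock_kernel_def[abs_def] by (intro borel_measurable_continuous_onI continuous_intros)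

lemma borel_measurable_fock_inf:
  assumes "f \<in> fock_inf \<alpha>"
  shows "f \<in> borel_measurable borel"
  using assms unfolding fock_inf_def
  by (auto intro: borel_measurable_continuous_onI holomorphic_on_imp_continuous_on)

lemma norm_fock_kernel_mult_exp:
  "cmod (fock_kernel \<alpha> z w) * exp (- \<alpha> * (cmod w)\<^sup>2 / 2)
     = exp (\<alpha> * (cmod z)\<^sup>2 / 2) * exp (- \<alpha> * (cmod (z - w))\<^sup>2 / 2)"
proof -
  have kernel: "cmod (fock_kernel \<alpha> z w) = exp (\<alpha> * Re (cnj z * w))"
    unfolding fock_kernel_def by (simp add: algebra_simps)
  have polarization: "Re (cnj z * w) = ((cmod z)\<^sup>2 + (cmod w)\<^sup>2 - (cmod (z - w))\<^sup>2) / 2"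
    unfolding cmod_power2 by (simp add: power2_eq_square algebra_simps)
  have "\<alpha> * (((cmod z)\<^sup>2 + (cmod w)\<^sup>2 - (cmod (z - w))\<^sup>2) / 2) + - \<alpha> * (cmod w)\<^sup>2 / 2
      = \<alpha> * (cmod z)\<^sup>2 / 2 + - \<alpha> * (cmod (z - w))\<^sup>2 / 2"
    by (simp add: field_simps)
  then show ?thesis
    unfolding kernel polarization exp_add[symmetric] by (rule arg_cong)
qed

lemma norm_fock_kernel_mult_exp_le:
  assumes "\<alpha> \<ge> 0"
  shows "cmod (fock_kernel \<alpha> z w) * exp (- \<alpha> * (cmod w)\<^sup>2 / 2) \<le> exp (\<alpha> * (cmod z)\<^sup>2 / 2)"
  unfolding norm_fock_kernel_mult_exp using assms by (simp add: mult_left_le)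

lemma fock_kernel_in_fock_inf:
  assumes "\<alpha> \<ge> 0"
  shows "fock_kernel \<alpha> z \<in> fock_inf \<alpha>"
proof -
  have "fock_kernel \<alpha> z holomorphic_on UNIV"
    unfolding fock_kernel_def[abs_def] by (intro holomorphic_intros)
  then show ?thesis
    unfolding fock_inf_def using norm_fock_kernel_mult_exp_le[OF assms] by blast
qed

lemma fock_inf_norm_fock_kernel_le:
  assumes "\<alpha> \<ge> 0"
  shows "fock_inf_norm \<alpha> (fock_kernel \<alpha> z) \<le> exp (\<alpha> * (cmod z)\<^sup>2 / 2)"
  unfolding fock_inf_norm_def by (rule cSUP_least) (use norm_fock_kernel_mult_exp_le[OF assms] in auto)

lemma fock_inf_norm_upper:
  assumes "f \<in> fock_inf \<alpha>"
  shows "cmod (f z) * exp (- \<alpha> * (cmod z)\<^sup>2 / 2) \<le> fock_inf_norm \<alpha> f"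
proof -
  from assms have "bdd_above (range (\<lambda>z. cmod (f z) * exp (- \<alpha> * (cmod z)\<^sup>2 / 2)))"
    unfolding fock_inf_def by auto
  then show ?thesis
    unfolding fock_inf_norm_def by (rule cSUP_upper[OF UNIV_I])
qed

lemma fock_inf_norm_nonneg:
  assumes "f \<in> fock_inf \<alpha>"
  shows "fock_inf_norm \<alpha> f \<ge> 0"
  using fock_inf_norm_upper[OF assms, of 0] by (meson order.trans mult_nonneg_nonneg norm_ge_zero exp_ge_zero)

lemma gauss_wt_mult_norm_fock_kernel_sq:
  "gauss_wt \<alpha> w * (cmod (fock_kernel \<alpha> z w))\<^sup>2
     = \<alpha> / pi * exp (\<alpha> * (cmod z)\<^sup>2) * exp (- \<alpha> * (cmod (z - w))\<^sup>2)"
proof -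
  have "(cmod (fock_kernel \<alpha> z w) * exp (- \<alpha> * (cmod w)\<^sup>2 / 2))\<^sup>2
      = (exp (\<alpha> * (cmod z)\<^sup>2 / 2) * exp (- \<alpha> * (cmod (z - w))\<^sup>2 / 2))\<^sup>2"
    by (simp only: norm_fock_kernel_mult_exp)
  then show ?thesis
    unfolding gauss_wt_def by (simp add: power_mult_distrib mult_ac flip: exp_double)
qed

section \<open>Necessity\<close>

lemma phi_tilde_2_eq_toeplitz_fock_kernel:
  assumes \<alpha>: "\<alpha> > 0" and nn: "\<And>w. \<phi> w \<ge> 0"
    and int: "integrable lborel
      (\<lambda>w. complex_of_real (\<phi> w * gauss_wt \<alpha> w) * fock_kernel \<alpha> z w * cnj (fock_kernel \<alpha> z w))"
  shows "phi_tilde \<alpha> \<phi> 2 z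
       = ennreal (exp (- \<alpha> * (cmod z)\<^sup>2) * cmod (toeplitz \<alpha> \<phi> (fock_kernel \<alpha> z) z))"
proof -
  define R where "R w = \<phi> w * gauss_wt \<alpha> w * (cmod (fock_kernel \<alpha> z w))\<^sup>2" for w
  have R_nonneg: "R w \<ge> 0" for w
    unfolding R_def gauss_wt_def using nn[of w] \<alpha> by simp
  have integrand:
    "complex_of_real (\<phi> w * gauss_wt \<alpha> w) * fock_kernel \<alpha> z w * cnj (fock_kernel \<alpha> z w) = R w" for w
    using complex_norm_square[of "fock_kernel \<alpha> z w", symmetric]
    unfolding R_def by (simp only: mult.assoc of_real_mult)
  have "integrable lborel (\<lambda>w. complex_of_real (R w))"
    using int by (simp only: integrand)
  then have R_int: "integrable lborel R"
    using integrable_norm R_nonneg by fastforce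
  have "toeplitz \<alpha> \<phi> (fock_kernel \<alpha> z) z = complex_of_real (integral\<^sup>L lborel R)"
    unfolding toeplitz_def integrand by simp
  then have T_diag: "cmod (toeplitz \<alpha> \<phi> (fock_kernel \<alpha> z) z) = integral\<^sup>L lborel R"
    using R_nonneg by (simp add: integral_nonneg)
  have "phi_tilde \<alpha> \<phi> 2 z = (\<integral>\<^sup>+ w. ennreal (exp (- \<alpha> * (cmod z)\<^sup>2)) * ennreal (R w) \<partial>lborel)"
    unfolding phi_tilde_def
  proof (rule nn_integral_cong)
    fix w
    have "\<alpha> / pi * \<phi> w * exp (- \<alpha> * 2 * (cmod (z - w))\<^sup>2 / 2) = exp (- \<alpha> * (cmod z)\<^sup>2) * R w"
      unfolding R_def mult.assoc gauss_wt_mult_norm_fock_kernel_sq by (simp add: mult_ac flip: exp_add)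
    then show "ennreal (\<alpha> / pi * \<phi> w * exp (- \<alpha> * 2 * (cmod (z - w))\<^sup>2 / 2))
        = ennreal (exp (- \<alpha> * (cmod z)\<^sup>2)) * ennreal (R w)"
      using R_nonneg[of w] by (simp add: ennreal_mult)
  qed
  also have "\<dots> = ennreal (exp (- \<alpha> * (cmod z)\<^sup>2) * integral\<^sup>L lborel R)"
    using R_int R_nonneg by (simp add: nn_integral_cmult nn_integral_eq_integral ennreal_mult)
  finally show ?thesis
    unfolding T_diag .
qed

lemma phi_tilde_2_bounded_of_toeplitz_bounded:
  assumes \<alpha>: "\<alpha> > 0" and nn: "\<And>w. \<phi> w \<ge> 0" and bounded: "toeplitz_bounded_fock_inf \<alpha> \<phi>"
  shows "\<exists>C. \<forall>z. phi_tilde \<alpha> \<phi> 2 z \<le> ennreal C"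
proof -
  from bounded obtain C where C: "\<And>f. f \<in> fock_inf \<alpha> \<Longrightarrow>
      (\<forall>z. integrable lborel (\<lambda>w. complex_of_real (\<phi> w * gauss_wt \<alpha> w) * f w * cnj (fock_kernel \<alpha> z w)))
      \<and> toeplitz \<alpha> \<phi> f \<in> fock_inf \<alpha>
      \<and> fock_inf_norm \<alpha> (toeplitz \<alpha> \<phi> f) \<le> C * fock_inf_norm \<alpha> f"
    unfolding toeplitz_bounded_fock_inf_def by blast
  have "phi_tilde \<alpha> \<phi> 2 z \<le> ennreal (max 0 C)" for z
  proof -
    define K where "K = fock_kernel \<alpha> z"
    define e where "e = exp (- \<alpha> * (cmod z)\<^sup>2 / 2)"
    have e: "e > 0" "exp (\<alpha> * (cmod z)\<^sup>2 / 2) = 1 / e" "e * e = exp (- \<alpha> * (cmod z)\<^sup>2)"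
      unfolding e_def by (simp_all add: exp_minus field_simps flip: exp_add)
    have K: "K \<in> fock_inf \<alpha>"
      unfolding K_def using \<alpha> by (simp add: fock_kernel_in_fock_inf)
    have "cmod (toeplitz \<alpha> \<phi> K z) * e \<le> fock_inf_norm \<alpha> (toeplitz \<alpha> \<phi> K)"
      unfolding e_def by (rule fock_inf_norm_upper) (use C[OF K] in blast)
    also have "\<dots> \<le> max 0 C * fock_inf_norm \<alpha> K"
      using C[OF K] fock_inf_norm_nonneg[OF K] by (meson order.trans max.cobounded2 mult_right_mono)
    also have "\<dots> \<le> max 0 C * (1 / e)"
      unfolding K_def e(2)[symmetric] using \<alpha> by (intro mult_left_mono fock_inf_norm_fock_kernel_le) auto
    finally have "e * e * cmod (toeplitz \<alpha> \<phi> K z) \<le> max 0 C"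
      using e(1) by (simp add: field_simps)
    moreover have "integrable lborel
        (\<lambda>w. complex_of_real (\<phi> w * gauss_wt \<alpha> w) * fock_kernel \<alpha> z w * cnj (fock_kernel \<alpha> z w))"
      using C[OF K] unfolding K_def by blast
    then have "phi_tilde \<alpha> \<phi> 2 z = ennreal (e * e * cmod (toeplitz \<alpha> \<phi> K z))"
      unfolding e(3) K_def by (rule phi_tilde_2_eq_toeplitz_fock_kernel[OF \<alpha> nn])
    ultimately show ?thesis
      by (simp add: ennreal_leI)
  qed
  then show ?thesis by blast
qed

section \<open>Sufficiency\<close>

lemma sum_power_div_fact_le_exp:
  fixes x :: real
  assumes "x \<ge> 0" and "finite I"
  shows "(\<Sum>i\<in>I. x ^ i / fact i) \<le> exp x"
  using assms summable_exp_generic[of x]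
  by (auto simp: exp_def divide_inverse ac_simps intro!: sum_le_suminf)

text \<open>Termwise integration is dominated by \<open>|h| e\<^bsup>|z| |g|\<^esup>\<close>.\<close>
lemma sums_integral_exp_power_series:
  fixes h g :: "'a \<Rightarrow> complex"
  assumes [measurable]: "h \<in> borel_measurable M" "g \<in> borel_measurable M"
    and moments: "\<And>r. integrable M (\<lambda>w. norm (h w) * exp (r * norm (g w)))"
  shows "(\<lambda>n. (\<integral> w. h w * (g w ^ n /\<^sub>R fact n) \<partial>M) * z ^ n) sums (\<integral> w. h w * exp (z * g w) \<partial>M)"
proof -
  define f where "f n w = h w * ((z * g w) ^ n /\<^sub>R fact n)" for n w
  define r where "r = norm z"
  have r: "r \<ge> 0"
    by (simp add: r_def)
  have norm_f: "norm (f n w) = norm (h w) * ((r * norm (g w)) ^ n / fact n)" for n w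
    by (simp add: f_def r_def norm_mult norm_power power_mult_distrib divide_inverse)
  have [measurable]: "f n \<in> borel_measurable M" for n
    unfolding f_def by measurable
  have norm_f_sum: "(\<Sum>i\<in>I. norm (f i w)) \<le> norm (h w) * exp (r * norm (g w))" if "finite I" for I w
    unfolding norm_f sum_distrib_left[symmetric]
    using r that by (intro mult_left_mono sum_power_div_fact_le_exp) auto
  have f_int: "integrable M (f n)" for n
    using norm_f_sum[of "{n}"] by (intro Bochner_Integration.integrable_bound[OF moments[of r]]) auto
  have summable_int: "summable (\<lambda>i. \<integral> w. norm (f i w) \<partial>M)"
  proof (rule summableI_nonneg_bounded)
    fix n
    have "(\<Sum>i<n. \<integral> w. norm (f i w) \<partial>M) = (\<integral> w. (\<Sum>i<n. norm (f i w)) \<partial>M)"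
      using f_int by (simp add: Bochner_Integration.integral_sum)
    also have "\<dots> \<le> (\<integral> w. norm (h w) * exp (r * norm (g w)) \<partial>M)"
      using f_int norm_f_sum[of "{..<n}"] moments[of r] by (intro integral_mono) auto
    finally show "(\<Sum>i<n. \<integral> w. norm (f i w) \<partial>M) \<le> (\<integral> w. norm (h w) * exp (r * norm (g w)) \<partial>M)" .
  qed simp
  have "(\<lambda>i. f i w) sums (h w * exp (z * g w))" for w
    unfolding f_def by (rule sums_mult[OF exp_converges])
  moreover have "summable (\<lambda>i. norm (f i w))" for w
    unfolding norm_f using exp_converges[of "r * norm (g w)"]
    by (intro summable_mult) (simp add: sums_iff divide_inverse ac_simps)
  ultimately have "(\<lambda>i. integral\<^sup>L M (f i)) sums (\<integral> w. h w * exp (z * g w) \<partial>M)"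
    using sums_integral[OF f_int _ summable_int] by (simp add: sums_iff)
  moreover have "f i = (\<lambda>w. h w * (g w ^ i /\<^sub>R fact i) * z ^ i)" for i
    unfolding f_def by (auto simp: scaleR_conv_of_real algebra_simps)
  ultimately show ?thesis
    by simp
qed

lemma holomorphic_on_integral_exp:
  fixes h g :: "'a \<Rightarrow> complex"
  assumes "h \<in> borel_measurable M" "g \<in> borel_measurable M"
    and "\<And>r. integrable M (\<lambda>w. norm (h w) * exp (r * norm (g w)))"
  shows "(\<lambda>z. \<integral> w. h w * exp (z * g w) \<partial>M) holomorphic_on UNIV"
proof -
  define c where "c n = (\<integral> w. h w * (g w ^ n /\<^sub>R fact n) \<partial>M)" for n
  have series: "(\<lambda>n. c n * z ^ n) sums (\<integral> w. h w * exp (z * g w) \<partial>M)" for z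
    unfolding c_def using assms by (rule sums_integral_exp_power_series)
  then have "(\<lambda>z. \<integral> w. h w * exp (z * g w) \<partial>M) = (\<lambda>z. \<Sum>n. c n * z ^ n)"
    by (auto simp: sums_iff)
  moreover have "summable (\<lambda>n. c n * z ^ n)" for z
    using series[of z] by (simp add: sums_iff)
  ultimately show ?thesis
    unfolding holomorphic_on_def field_differentiable_def
    using termdiffs_strong_converges_everywhere by fastforce
qed

lemma nn_integral_norm_le_phi_tilde:
  fixes F :: "complex \<Rightarrow> 'b::real_normed_vector"
  assumes "\<alpha> \<ge> 0" and "\<And>w. \<phi> w \<ge> 0" and [measurable]: "\<phi> \<in> borel_measurable lborel"
    and "C \<ge> 0" and "\<And>w. norm (F w) \<le> C * (\<alpha> / pi * \<phi> w * exp (- \<alpha> * t * (cmod (z - w))\<^sup>2 / 2))"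
  shows "(\<integral>\<^sup>+ w. norm (F w) \<partial>lborel) \<le> ennreal C * phi_tilde \<alpha> \<phi> t z"
  unfolding phi_tilde_def using assms
  by (subst nn_integral_cmult[symmetric]) (auto intro!: nn_integral_mono simp flip: ennreal_mult)

lemma norm_weighted_fock_inf_le:
  assumes "f \<in> fock_inf \<alpha>" and "\<alpha> \<ge> 0" and "\<phi> w \<ge> 0"
  shows "cmod (complex_of_real (\<phi> w * gauss_wt \<alpha> w) * f w)
           \<le> fock_inf_norm \<alpha> f * (\<alpha> / pi * \<phi> w * exp (- \<alpha> * (cmod w)\<^sup>2 / 2))"
proof -
  have gauss_split: "gauss_wt \<alpha> w = \<alpha> / pi * exp (- \<alpha> * (cmod w)\<^sup>2 / 2) * exp (- \<alpha> * (cmod w)\<^sup>2 / 2)"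
    unfolding gauss_wt_def by (simp flip: exp_add)
  have "\<phi> w * gauss_wt \<alpha> w \<ge> 0"
    using assms unfolding gauss_wt_def by simp
  then have "cmod (complex_of_real (\<phi> w * gauss_wt \<alpha> w) * f w)
      = (\<alpha> / pi * \<phi> w * exp (- \<alpha> * (cmod w)\<^sup>2 / 2)) * (cmod (f w) * exp (- \<alpha> * (cmod w)\<^sup>2 / 2))"
    unfolding norm_mult norm_of_real gauss_split by (simp only: abs_of_nonneg mult_ac)
  also have "\<dots> \<le> (\<alpha> / pi * \<phi> w * exp (- \<alpha> * (cmod w)\<^sup>2 / 2)) * fock_inf_norm \<alpha> f"
    using assms by (intro mult_left_mono fock_inf_norm_upper) auto
  finally show ?thesis
    by (simp add: mult.commute)
qed

lemma norm_toeplitz_integrand_le: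
  assumes "f \<in> fock_inf \<alpha>" and "\<alpha> \<ge> 0" and "\<phi> w \<ge> 0"
  shows "cmod (complex_of_real (\<phi> w * gauss_wt \<alpha> w) * f w * cnj (fock_kernel \<alpha> z w))
           \<le> fock_inf_norm \<alpha> f * exp (\<alpha> * (cmod z)\<^sup>2 / 2)
              * (\<alpha> / pi * \<phi> w * exp (- \<alpha> * (cmod (z - w))\<^sup>2 / 2))"
proof -
  have "cmod (complex_of_real (\<phi> w * gauss_wt \<alpha> w) * f w * cnj (fock_kernel \<alpha> z w))
      = cmod (complex_of_real (\<phi> w * gauss_wt \<alpha> w) * f w) * cmod (fock_kernel \<alpha> z w)"
    by (simp only: norm_mult[of "complex_of_real _ * f w"] complex_mod_cnj)
  also have "\<dots> \<le> fock_inf_norm \<alpha> f * (\<alpha> / pi * \<phi> w * exp (- \<alpha> * (cmod w)\<^sup>2 / 2))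
      * cmod (fock_kernel \<alpha> z w)"
    using assms by (intro mult_right_mono norm_weighted_fock_inf_le) auto
  also have "\<dots> = fock_inf_norm \<alpha> f * (\<alpha> / pi * \<phi> w)
      * (cmod (fock_kernel \<alpha> z w) * exp (- \<alpha> * (cmod w)\<^sup>2 / 2))"
    by (simp only: mult_ac)
  finally show ?thesis
    unfolding norm_fock_kernel_mult_exp by (simp only: mult_ac)
qed

lemma toeplitz_integrable_and_bound:
  assumes \<alpha>: "\<alpha> > 0" and nn: "\<And>w. \<phi> w \<ge> 0" and [measurable]: "\<phi> \<in> borel_measurable lborel"
    and B: "B \<ge> 0" "\<And>z. phi_tilde \<alpha> \<phi> 1 z \<le> ennreal B"
    and f: "f \<in> fock_inf \<alpha>"
  shows "integrable lborel (\<lambda>w. complex_of_real (\<phi> w * gauss_wt \<alpha> w) * f w * cnj (fock_kernel \<alpha> z w))"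
    and "cmod (toeplitz \<alpha> \<phi> f z) * exp (- \<alpha> * (cmod z)\<^sup>2 / 2) \<le> B * fock_inf_norm \<alpha> f"
proof -
  define N where "N = fock_inf_norm \<alpha> f * exp (\<alpha> * (cmod z)\<^sup>2 / 2)"
  have N: "N \<ge> 0"
    unfolding N_def using fock_inf_norm_nonneg[OF f] by simp
  note [measurable] = borel_measurable_fock_inf[OF f]
  let ?F = "\<lambda>w. complex_of_real (\<phi> w * gauss_wt \<alpha> w) * f w * cnj (fock_kernel \<alpha> z w)"
  have nn_int: "(\<integral>\<^sup>+ w. norm (?F w) \<partial>lborel) \<le> ennreal (N * B)"
  proof -
    have "(\<integral>\<^sup>+ w. norm (?F w) \<partial>lborel) \<le> ennreal N * phi_tilde \<alpha> \<phi> 1 z"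
      using \<alpha> nn N norm_toeplitz_integrand_le[OF f]
      by (intro nn_integral_norm_le_phi_tilde) (simp_all add: N_def)
    also have "\<dots> \<le> ennreal N * ennreal B"
      by (intro mult_left_mono B) simp
    finally show ?thesis
      using N B by (simp add: ennreal_mult)
  qed
  then show int: "integrable lborel ?F"
    by (intro integrableI_bounded) (auto intro: le_less_trans)
  have "ennreal (cmod (toeplitz \<alpha> \<phi> f z)) \<le> ennreal (N * B)"
    unfolding toeplitz_def using integral_norm_bound_ennreal[OF int] nn_int by (rule order.trans)
  then have "cmod (toeplitz \<alpha> \<phi> f z) \<le> N * B"
    using N B by simp
  then have "cmod (toeplitz \<alpha> \<phi> f z) * exp (- \<alpha> * (cmod z)\<^sup>2 / 2) \<le> N * B * exp (- \<alpha> * (cmod z)\<^sup>2 / 2)"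
    by (rule mult_right_mono) simp
  also have "\<dots> = B * fock_inf_norm \<alpha> f"
    unfolding N_def by (simp add: mult_ac flip: exp_add)
  finally show "cmod (toeplitz \<alpha> \<phi> f z) * exp (- \<alpha> * (cmod z)\<^sup>2 / 2) \<le> B * fock_inf_norm \<alpha> f" .
qed

text \<open>Half of the Gaussian decay of the weight absorbs \<open>e\<^bsup>r |w|\<^esup>\<close>; the other half is
  \<open>phi_tilde \<alpha> \<phi> (1 / 2) 0\<close>.\<close>
lemma integrable_norm_weighted_fock_inf_mult_exp:
  assumes \<alpha>: "\<alpha> > 0" and nn: "\<And>w. \<phi> w \<ge> 0" and [measurable]: "\<phi> \<in> borel_measurable lborel"
    and finite: "phi_tilde \<alpha> \<phi> (1 / 2) 0 < \<infinity>"
    and f: "f \<in> fock_inf \<alpha>"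
  shows "integrable lborel (\<lambda>w. cmod (complex_of_real (\<phi> w * gauss_wt \<alpha> w) * f w) * exp (r * cmod w))"
proof (rule integrableI_bounded)
  note [measurable] = borel_measurable_fock_inf[OF f]
  define N where "N = fock_inf_norm \<alpha> f"
  have N: "N \<ge> 0"
    unfolding N_def by (rule fock_inf_norm_nonneg[OF f])
  let ?H = "\<lambda>w. cmod (complex_of_real (\<phi> w * gauss_wt \<alpha> w) * f w) * exp (r * cmod w)"
  have exponent: "r * cmod w - \<alpha> * (cmod w)\<^sup>2 / 2 \<le> r\<^sup>2 / \<alpha> - \<alpha> * (1 / 2) * (cmod (0 - w))\<^sup>2 / 2" for w
  proof -
    have "0 \<le> (\<alpha> * cmod w / 2 - r)\<^sup>2 / \<alpha>"
      using \<alpha> by simp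
    also have "\<dots> = \<alpha> * (cmod w)\<^sup>2 / 4 - r * cmod w + r\<^sup>2 / \<alpha>"
      using \<alpha> by (simp add: power2_eq_square field_simps)
    finally show ?thesis by simp
  qed
  have "norm (?H w)
      \<le> N * exp (r\<^sup>2 / \<alpha>) * (\<alpha> / pi * \<phi> w * exp (- \<alpha> * (1 / 2) * (cmod (0 - w))\<^sup>2 / 2))" for w
  proof -
    have "norm (?H w) = cmod (complex_of_real (\<phi> w * gauss_wt \<alpha> w) * f w) * exp (r * cmod w)"
      by simp
    also have "\<dots> \<le> N * (\<alpha> / pi * \<phi> w * exp (- \<alpha> * (cmod w)\<^sup>2 / 2)) * exp (r * cmod w)"
      unfolding N_def using \<alpha> nn[of w] by (intro mult_right_mono norm_weighted_fock_inf_le[OF f]) auto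
    also have "\<dots> = N * (\<alpha> / pi * \<phi> w) * exp (r * cmod w - \<alpha> * (cmod w)\<^sup>2 / 2)"
      using exp_add[of "- \<alpha> * (cmod w)\<^sup>2 / 2" "r * cmod w"] by (simp only: mult.assoc) simp
    also have "\<dots> \<le> N * (\<alpha> / pi * \<phi> w) * exp (r\<^sup>2 / \<alpha> - \<alpha> * (1 / 2) * (cmod (0 - w))\<^sup>2 / 2)"
      using N \<alpha> nn[of w] exponent[of w] by (intro mult_left_mono) auto
    also have "\<dots> = N * exp (r\<^sup>2 / \<alpha>) * (\<alpha> / pi * \<phi> w * exp (- \<alpha> * (1 / 2) * (cmod (0 - w))\<^sup>2 / 2))"
      using exp_add[of "r\<^sup>2 / \<alpha>" "- \<alpha> * (1 / 2) * (cmod (0 - w))\<^sup>2 / 2"] by (simp only: mult_ac) simp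
    finally show ?thesis .
  qed
  then have "(\<integral>\<^sup>+ w. norm (?H w) \<partial>lborel) \<le> ennreal (N * exp (r\<^sup>2 / \<alpha>)) * phi_tilde \<alpha> \<phi> (1 / 2) 0"
    using \<alpha> nn N by (intro nn_integral_norm_le_phi_tilde) auto
  also have "\<dots> < \<infinity>"
    using finite by (simp add: ennreal_mult_less_top)
  finally show "(\<integral>\<^sup>+ w. norm (?H w) \<partial>lborel) < \<infinity>" .
  show "?H \<in> borel_measurable lborel"
    by measurable
qed

lemma toeplitz_holomorphic:
  assumes \<alpha>: "\<alpha> > 0" and nn: "\<And>w. \<phi> w \<ge> 0" and meas: "\<phi> \<in> borel_measurable lborel"
    and finite: "phi_tilde \<alpha> \<phi> (1 / 2) 0 < \<infinity>"
    and f: "f \<in> fock_inf \<alpha>"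
  shows "toeplitz \<alpha> \<phi> f holomorphic_on UNIV"
proof -
  note [measurable] = meas borel_measurable_fock_inf[OF f]
  define h where "h w = complex_of_real (\<phi> w * gauss_wt \<alpha> w) * f w" for w
  have "(\<lambda>z. \<integral> w. h w * exp (z * (complex_of_real \<alpha> * cnj w)) \<partial>lborel) holomorphic_on UNIV"
    using integrable_norm_weighted_fock_inf_mult_exp[OF \<alpha> nn meas finite f, of "_ * \<alpha>"] \<alpha>
    unfolding h_def by (intro holomorphic_on_integral_exp) (auto simp: norm_mult mult_ac)
  moreover have "toeplitz \<alpha> \<phi> f = (\<lambda>z. \<integral> w. h w * exp (z * (complex_of_real \<alpha> * cnj w)) \<partial>lborel)"
    unfolding toeplitz_def h_def fock_kernel_def by (simp add: exp_cnj mult_ac)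
  ultimately show ?thesis
    by simp
qed

lemma toeplitz_bounded_fock_infI:
  assumes \<alpha>: "\<alpha> > 0" and nn: "\<And>w. \<phi> w \<ge> 0" and meas: "\<phi> \<in> borel_measurable lborel"
    and B: "B \<ge> 0" "\<And>z. phi_tilde \<alpha> \<phi> 1 z \<le> ennreal B"
    and finite: "phi_tilde \<alpha> \<phi> (1 / 2) 0 < \<infinity>"
  shows "toeplitz_bounded_fock_inf \<alpha> \<phi>"
  unfolding toeplitz_bounded_fock_inf_def
proof (intro exI ballI conjI allI)
  fix f assume f: "f \<in> fock_inf \<alpha>"
  note T = toeplitz_integrable_and_bound[OF \<alpha> nn meas B f]
  show "integrable lborel (\<lambda>w. complex_of_real (\<phi> w * gauss_wt \<alpha> w) * f w * cnj (fock_kernel \<alpha> z w))" for z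
    by (rule T(1))
  show "toeplitz \<alpha> \<phi> f \<in> fock_inf \<alpha>"
    unfolding fock_inf_def using toeplitz_holomorphic[OF \<alpha> nn meas finite f] T(2) by blast
  show "fock_inf_norm \<alpha> (toeplitz \<alpha> \<phi> f) \<le> B * fock_inf_norm \<alpha> f"
    unfolding fock_inf_norm_def[of \<alpha> "toeplitz \<alpha> \<phi> f"] by (rule cSUP_least) (use T(2) in auto)
qed

theorem theorem4p3:
  fixes \<alpha> :: real and \<phi> :: "complex \<Rightarrow> real"
  assumes "\<alpha> > 0"
    and "\<And>w. \<phi> w \<ge> 0"
    and "\<phi> \<in> borel_measurable lborel"
    and "cond_I1 \<alpha> \<phi>"
  shows "toeplitz_bounded_fock_inf \<alpha> \<phi> \<longleftrightarrow>
         (\<forall>t>0. ess_bounded_ennreal (phi_tilde \<alpha> \<phi> t))"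
proof
  assume "toeplitz_bounded_fock_inf \<alpha> \<phi>"
  then obtain C where "\<And>z. phi_tilde \<alpha> \<phi> 2 z \<le> ennreal C"
    using phi_tilde_2_bounded_of_toeplitz_bounded assms(1,2) by blast
  then have "ess_bounded_ennreal (phi_tilde \<alpha> \<phi> 2)"
    by (rule ess_bounded_ennreal_phi_tildeI[OF assms(3)])
  then show "\<forall>t>0. ess_bounded_ennreal (phi_tilde \<alpha> \<phi> t)"
    using phi_tilde_bounded_of_ess_bounded[OF assms(1-3)] ess_bounded_ennreal_phi_tildeI[OF assms(3)]
    by (metis zero_less_numeral)
next
  assume ess: "\<forall>t>0. ess_bounded_ennreal (phi_tilde \<alpha> \<phi> t)"
  obtain B where "B \<ge> 0" "\<And>z. phi_tilde \<alpha> \<phi> 1 z \<le> ennreal B"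
    using phi_tilde_bounded_of_ess_bounded[OF assms(1-3), of 1 1] ess by auto
  moreover obtain B' where "\<And>z. phi_tilde \<alpha> \<phi> (1 / 2) z \<le> ennreal B'"
    using phi_tilde_bounded_of_ess_bounded[OF assms(1-3), of 1 "1 / 2"] ess by auto
  then have "phi_tilde \<alpha> \<phi> (1 / 2) 0 < \<infinity>"
    by (rule le_less_trans) simp
  ultimately show "toeplitz_bounded_fock_inf \<alpha> \<phi>"
    using toeplitz_bounded_fock_infI[OF assms(1-3)] by blast
qed

end
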